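(* For a $d$-dimensional state ensemble $\Omega=\{(p_j,\rho_j)\}_{j=0}^{k-1}$, \[ P_{\mathrm{suc},\mathcal{M}_{\mathcal{I}}}(\Omega)=\widetilde{P}_{\mathrm{suc,SIO}}(\Omega)\ \big(=\widetilde{P}_{\mathrm{suc,DIO}}(\Omega)\big). \]
   Context: $\mathcal{M}_{\mathcal{I}}$ is the set of incoherent measurements: POVMs $\{E_m\}$ with $\Delta(E_m)=E_m$ for all $m$, where $\Delta(\rho)=\sum_i|i\rangle\langle i|\rho|i\rangle\langle i|$ is complete dephasing in the computational basis; $P_{\mathrm{suc},\mathcal{M}_{\mathcal{I}}}(\Omega)=\max_{\{E_j\}\in\mathcal{M}_{\mathcal{I}}}\sum_jp_j\mathrm{tr}(E_j\rho_j)$. For a set of free operations $\mathcal{O}$, $\widetilde{P}_{\mathrm{suc},\mathcal{O}}(\Omega)=\sup\sum_jp_j\mathrm{tr}[\mathcal{N}_{A\to BA'}(\rho_j)(|j\rangle\langle j|_B\otimes I_{A'})]$ over $\mathcal{N}_{A\to BA'}\in\mathcal{O}$, $\dim B=k$, $A'\cong A$. DIO are channels commuting with $\Delta$; SIO (strictly incoherent operations) are channels with Kraus operators $\{K_n\}$ such that both $\{K_n\}$ and $\{K_n^\dagger\}$ map incoherent states to (unnormalized) incoherent states; SIO $\subsetneq$ DIO. *)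

theory Defs
  imports "Jordan_Normal_Form.Matrix" "Jordan_Normal_Form.Schur_Decomposition"
begin

definition mtrace :: "complex mat \<Rightarrow> complex" where
  "mtrace A = (\<Sum>i<dim_row A. A $$ (i, i))"

definition psd :: "nat \<Rightarrow> complex mat \<Rightarrow> bool" where
  "psd n A \<longleftrightarrow> A \<in> carrier_mat n n \<and>
     (\<forall>v. (\<Sum>i<n. \<Sum>j<n. cnj (v i) * A $$ (i, j) * v j) \<in> \<real> \<and>
          Re (\<Sum>i<n. \<Sum>j<n. cnj (v i) * A $$ (i, j) * v j) \<ge> 0)"

definition density :: "nat \<Rightarrow> complex mat \<Rightarrow> bool" where
  "density n \<rho> \<longleftrightarrow> psd n \<rho> \<and> mtrace \<rho> = 1"

definition dephase :: "nat \<Rightarrow> complex mat \<Rightarrow> complex mat" where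
  "dephase n A = mat n n (\<lambda>(i, j). if i = j then A $$ (i, j) else 0)"

definition incoherent_state :: "nat \<Rightarrow> complex mat \<Rightarrow> bool" where
  "incoherent_state n \<rho> \<longleftrightarrow> density n \<rho> \<and> dephase n \<rho> = \<rho>"

definition msum :: "nat \<Rightarrow> complex mat list \<Rightarrow> complex mat" where
  "msum n As = foldr (+) As (0\<^sub>m n n)"

definition ensemble :: "nat \<Rightarrow> nat \<Rightarrow> (nat \<Rightarrow> real) \<Rightarrow> (nat \<Rightarrow> complex mat) \<Rightarrow> bool" where
  "ensemble d k p \<rho> \<longleftrightarrow> (\<forall>j<k. p j \<ge> 0 \<and> density d (\<rho> j)) \<and> (\<Sum>j<k. p j) = 1"

definition povm :: "nat \<Rightarrow> nat \<Rightarrow> (nat \<Rightarrow> complex mat) \<Rightarrow> bool" where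
  "povm d k E \<longleftrightarrow> (\<forall>j<k. psd d (E j)) \<and> msum d (map E [0..<k]) = 1\<^sub>m d"

definition incoherent_povm :: "nat \<Rightarrow> nat \<Rightarrow> (nat \<Rightarrow> complex mat) \<Rightarrow> bool" where
  "incoherent_povm d k E \<longleftrightarrow> povm d k E \<and> (\<forall>j<k. dephase d (E j) = E j)"

definition Psuc_MI :: "nat \<Rightarrow> nat \<Rightarrow> (nat \<Rightarrow> real) \<Rightarrow> (nat \<Rightarrow> complex mat) \<Rightarrow> real" where
  "Psuc_MI d k p \<rho> = Sup {(\<Sum>j<k. p j * Re (mtrace (E j * \<rho> j))) | E. incoherent_povm d k E}"

text \<open>Output space C^k tensor C^d, basis |b> tensor |a> has index b * d + a.
  A channel is given by a finite list of Kraus operators (k*d) x d with sum K^* K = I.\<close>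
definition kraus_channel :: "nat \<Rightarrow> nat \<Rightarrow> complex mat list \<Rightarrow> bool" where
  "kraus_channel n m Ks \<longleftrightarrow> (\<forall>K\<in>set Ks. K \<in> carrier_mat m n) \<and>
     msum n (map (\<lambda>K. mat_adjoint K * K) Ks) = 1\<^sub>m n"

definition kraus_apply :: "nat \<Rightarrow> complex mat list \<Rightarrow> complex mat \<Rightarrow> complex mat" where
  "kraus_apply m Ks X = msum m (map (\<lambda>K. K * X * mat_adjoint K) Ks)"

definition DIO :: "nat \<Rightarrow> nat \<Rightarrow> complex mat list \<Rightarrow> bool" where
  "DIO n m Ks \<longleftrightarrow> kraus_channel n m Ks \<and>
     (\<forall>X \<in> carrier_mat n n. kraus_apply m Ks (dephase n X) = dephase m (kraus_apply m Ks X))"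

definition SIO :: "nat \<Rightarrow> nat \<Rightarrow> complex mat list \<Rightarrow> bool" where
  "SIO n m Ks \<longleftrightarrow> kraus_channel n m Ks \<and>
     (\<forall>K\<in>set Ks.
        (\<forall>\<rho>. incoherent_state n \<rho> \<longrightarrow>
              dephase m (K * \<rho> * mat_adjoint K) = K * \<rho> * mat_adjoint K) \<and>
        (\<forall>\<sigma>. incoherent_state m \<sigma> \<longrightarrow>
              dephase n (mat_adjoint K * \<sigma> * K) = mat_adjoint K * \<sigma> * K))"

text \<open>|j><j|_B tensor I_{A'} on C^k tensor C^d.\<close>
definition projB :: "nat \<Rightarrow> nat \<Rightarrow> nat \<Rightarrow> complex mat" where
  "projB k d j = mat (k * d) (k * d) (\<lambda>(a, b). if a = b \<and> a div d = j then 1 else 0)"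

definition Psuc_tilde ::
  "(nat \<Rightarrow> nat \<Rightarrow> complex mat list \<Rightarrow> bool) \<Rightarrow> nat \<Rightarrow> nat \<Rightarrow> (nat \<Rightarrow> real) \<Rightarrow> (nat \<Rightarrow> complex mat) \<Rightarrow> real" where
  "Psuc_tilde Ops d k p \<rho> =
     Sup {(\<Sum>j<k. p j * Re (mtrace (kraus_apply (k * d) Ks (\<rho> j) * projB k d j))) | Ks. Ops d (k * d) Ks}"

end

theory Submission
  imports Defs
begin

(* Both SIO and DIO act classically on diagonals: the a-th diagonal entry of the output is
   sum_i sum_y |K_i(a,y)|^2 rho(y,y). For DIO this holds because the output diagonal is that of
   the image of Delta(rho); for SIO because feeding the incoherent state |b><b| to the adjoint
   Kraus operators forces every row of every Kraus operator to have at most one nonzero entry.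
   Hence such a channel succeeds exactly as often as the diagonal POVM with
   E_j(x,x) = sum_i sum_(a in block j of B x A') |K_i(a,x)|^2.
   Conversely, an incoherent POVM is realised by the Kraus operators sqrt(E_j(x,x)) |j,x><x|,
   which are both SIO and DIO. So the three sets of achievable success probabilities coincide,
   whatever the weights p. *)

lemma sum_lessThan_eq_single:
  fixes f :: "nat \<Rightarrow> 'a::comm_monoid_add"
  assumes "x < n" and "\<And>y. y < n \<Longrightarrow> y \<noteq> x \<Longrightarrow> f y = 0"
  shows "(\<Sum>y<n. f y) = f x"
proof -
  have "(\<Sum>y<n. f y) = (\<Sum>y<n. if y = x then f x else 0)"
    using assms(2) by (intro sum.cong) auto
  also have "\<dots> = f x"
    using assms(1) by simp
  finally show ?thesis .
qed

lemma sum_lessThan_mult_split: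
  "(\<Sum>c<k * d. g c) = (\<Sum>j<k. \<Sum>x<d. g (j * d + x :: nat))"
proof -
  have "(\<Sum>c<k * d. g c) = (\<Sum>j<k. sum g {j * d..<j * d + d})"
    using sum.nat_group[of g d k] by simp
  also have "\<dots> = (\<Sum>j<k. \<Sum>x<d. g (j * d + x))"
  proof (rule sum.cong[OF refl])
    fix j
    show "sum g {j * d..<j * d + d} = (\<Sum>x<d. g (j * d + x))"
      by (rule sum.reindex_bij_witness[where j = "\<lambda>c. c - j * d" and i = "\<lambda>x. j * d + x"]) auto
  qed
  finally show ?thesis .
qed

lemma block_index_less:
  fixes j k x d :: nat
  assumes "j < k" and "x < d"
  shows "j * d + x < k * d"
proof -
  have "j * d + x < Suc j * d" using assms(2) by simp
  also have "\<dots> \<le> k * d" using assms(1) by (intro mult_le_mono1) simp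
  finally show ?thesis .
qed

lemma carrier_mat_adjoint: "K \<in> carrier_mat m n \<Longrightarrow> mat_adjoint K \<in> carrier_mat n m"
  unfolding mat_adjoint_def by auto

lemma index_mat_adjoint:
  "K \<in> carrier_mat m n \<Longrightarrow> i < n \<Longrightarrow> j < m \<Longrightarrow> mat_adjoint K $$ (i, j) = cnj (K $$ (j, i))"
  unfolding mat_adjoint_def by (auto simp: mat_of_rows_def)

lemma sandwich_carrier:
  "K \<in> carrier_mat m n \<Longrightarrow> X \<in> carrier_mat n n \<Longrightarrow> K * X * mat_adjoint K \<in> carrier_mat m m"
  by (metis carrier_mat_adjoint mult_carrier_mat)

lemma index_sandwich:
  assumes "K \<in> carrier_mat m n" "X \<in> carrier_mat n n" "a < m" "b < m"
  shows "(K * X * mat_adjoint K) $$ (a, b) =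
    (\<Sum>x<n. \<Sum>y<n. K $$ (a, x) * X $$ (x, y) * cnj (K $$ (b, y)))"
proof -
  have "(K * X * mat_adjoint K) $$ (a, b) =
      (\<Sum>y<n. (\<Sum>x<n. K $$ (a, x) * X $$ (x, y)) * cnj (K $$ (b, y)))"
    using assms carrier_mat_adjoint[OF assms(1)]
    by (simp add: index_mult_mat scalar_prod_def index_mat_adjoint atLeast0LessThan
        del: assoc_mult_mat)
  also have "\<dots> = (\<Sum>x<n. \<Sum>y<n. K $$ (a, x) * X $$ (x, y) * cnj (K $$ (b, y)))"
    unfolding sum_distrib_right by (rule sum.swap)
  finally show ?thesis .
qed

lemma index_adjoint_sandwich:
  assumes "K \<in> carrier_mat m n" "S \<in> carrier_mat m m" "x < n" "y < n"
  shows "(mat_adjoint K * S * K) $$ (x, y) =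
    (\<Sum>a<m. \<Sum>b<m. cnj (K $$ (a, x)) * S $$ (a, b) * K $$ (b, y))"
proof -
  have "(mat_adjoint K * S * K) $$ (x, y) =
      (\<Sum>b<m. (\<Sum>a<m. cnj (K $$ (a, x)) * S $$ (a, b)) * K $$ (b, y))"
    using assms carrier_mat_adjoint[OF assms(1)]
    by (simp add: index_mult_mat scalar_prod_def index_mat_adjoint atLeast0LessThan
        del: assoc_mult_mat)
  also have "\<dots> = (\<Sum>a<m. \<Sum>b<m. cnj (K $$ (a, x)) * S $$ (a, b) * K $$ (b, y))"
    unfolding sum_distrib_right by (rule sum.swap)
  finally show ?thesis .
qed

lemma index_adjoint_mult:
  assumes "K \<in> carrier_mat m n" "x < n" "y < n"
  shows "(mat_adjoint K * K) $$ (x, y) = (\<Sum>a<m. cnj (K $$ (a, x)) * K $$ (a, y))"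
  using assms carrier_mat_adjoint[OF assms(1)]
  by (simp add: index_mult_mat scalar_prod_def index_mat_adjoint atLeast0LessThan)

lemma msum_carrier: "\<forall>A\<in>set As. A \<in> carrier_mat n n \<Longrightarrow> msum n As \<in> carrier_mat n n"
  unfolding msum_def by (induction As) auto

lemma index_msum:
  assumes "\<forall>A\<in>set As. A \<in> carrier_mat n n" "i < n" "j < n"
  shows "msum n As $$ (i, j) = (\<Sum>A\<leftarrow>As. A $$ (i, j))"
  using assms
proof (induction As)
  case (Cons A As)
  then show ?case
    using msum_carrier[of As n] by (simp add: msum_def)
qed (simp add: msum_def)

lemma index_msum_map:
  assumes "\<forall>x\<in>set xs. f x \<in> carrier_mat n n" "i < n" "j < n"
  shows "msum n (map f xs) $$ (i, j) = (\<Sum>l<length xs. f (xs ! l) $$ (i, j))"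
  using assms index_msum[of "map f xs" n i j]
  by (simp add: sum_list_sum_nth atLeast0LessThan)

lemma kraus_apply_carrier:
  "\<forall>K\<in>set Ks. K \<in> carrier_mat m n \<Longrightarrow> X \<in> carrier_mat n n \<Longrightarrow>
    kraus_apply m Ks X \<in> carrier_mat m m"
  unfolding kraus_apply_def by (auto intro!: msum_carrier sandwich_carrier simp del: assoc_mult_mat)

lemma index_kraus_apply:
  assumes Ks: "\<forall>K\<in>set Ks. K \<in> carrier_mat m n" and X: "X \<in> carrier_mat n n"
    and ab: "a < m" "b < m"
  shows "kraus_apply m Ks X $$ (a, b) =
    (\<Sum>i<length Ks. \<Sum>x<n. \<Sum>y<n. Ks ! i $$ (a, x) * X $$ (x, y) * cnj (Ks ! i $$ (b, y)))"
proof -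
  have "\<forall>K\<in>set Ks. K * X * mat_adjoint K \<in> carrier_mat m m"
    using Ks X sandwich_carrier by blast
  then have "kraus_apply m Ks X $$ (a, b) = (\<Sum>i<length Ks. (Ks ! i * X * mat_adjoint (Ks ! i)) $$ (a, b))"
    unfolding kraus_apply_def using ab by (rule index_msum_map)
  also have "\<dots> = (\<Sum>i<length Ks. \<Sum>x<n. \<Sum>y<n. Ks ! i $$ (a, x) * X $$ (x, y) * cnj (Ks ! i $$ (b, y)))"
    using Ks X ab by (intro sum.cong refl index_sandwich) auto
  finally show ?thesis .
qed

lemma index_dephase:
  "i < n \<Longrightarrow> j < n \<Longrightarrow> dephase n A $$ (i, j) = (if i = j then A $$ (i, j) else 0)"
  by (simp add: dephase_def)

lemma dephase_carrier: "dephase n A \<in> carrier_mat n n"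
  by (simp add: dephase_def)

lemma dephase_fixed_iff:
  assumes "A \<in> carrier_mat n n"
  shows "dephase n A = A \<longleftrightarrow> (\<forall>i<n. \<forall>j<n. i \<noteq> j \<longrightarrow> A $$ (i, j) = 0)"
proof
  assume "dephase n A = A"
  then show "\<forall>i<n. \<forall>j<n. i \<noteq> j \<longrightarrow> A $$ (i, j) = 0"
    using index_dephase[of _ n _ A] by metis
next
  assume off: "\<forall>i<n. \<forall>j<n. i \<noteq> j \<longrightarrow> A $$ (i, j) = 0"
  show "dephase n A = A"
  proof (rule eq_matI)
    fix i j assume "i < dim_row A" "j < dim_col A"
    then show "dephase n A $$ (i, j) = A $$ (i, j)"
      using assms off by (simp add: index_dephase)
  qed (use assms dephase_carrier[of n A] in auto)
qed

lemma mtrace_mult_diagonal: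
  assumes "A \<in> carrier_mat n n" "B \<in> carrier_mat n n" "dephase n A = A"
  shows "mtrace (A * B) = (\<Sum>x<n. A $$ (x, x) * B $$ (x, x))"
proof -
  have off: "\<And>x y. x < n \<Longrightarrow> y < n \<Longrightarrow> y \<noteq> x \<Longrightarrow> A $$ (x, y) = 0"
    using assms(1,3) dephase_fixed_iff by blast
  have "mtrace (A * B) = (\<Sum>x<n. \<Sum>y<n. A $$ (x, y) * B $$ (y, x))"
    using assms unfolding mtrace_def by (auto simp: index_mult_mat scalar_prod_def atLeast0LessThan)
  also have "\<dots> = (\<Sum>x<n. A $$ (x, x) * B $$ (x, x))"
    using off by (intro sum.cong refl sum_lessThan_eq_single) auto
  finally show ?thesis .
qed

lemma mtrace_mult_projB:
  assumes A: "A \<in> carrier_mat (k * d) (k * d)" and j: "j < k"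
  shows "mtrace (A * projB k d j) = (\<Sum>x<d. A $$ (j * d + x, j * d + x))"
proof -
  have "mtrace (A * projB k d j) = (\<Sum>a<k * d. \<Sum>b<k * d. A $$ (a, b) * projB k d j $$ (b, a))"
    using A unfolding mtrace_def projB_def by (auto simp: index_mult_mat scalar_prod_def atLeast0LessThan)
  also have "\<dots> = (\<Sum>a<k * d. if a div d = j then A $$ (a, a) else 0)"
    by (intro sum.cong refl, subst sum_lessThan_eq_single) (auto simp: projB_def)
  also have "\<dots> = (\<Sum>j'<k. \<Sum>x<d. if (j' * d + x) div d = j then A $$ (j' * d + x, j' * d + x) else 0)"
    by (rule sum_lessThan_mult_split)
  also have "\<dots> = (\<Sum>x<d. \<Sum>j'<k. if j' = j then A $$ (j' * d + x, j' * d + x) else 0)"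
    by (subst sum.swap) (intro sum.cong refl, auto)
  also have "\<dots> = (\<Sum>x<d. A $$ (j * d + x, j * d + x))"
    using j by simp
  finally show ?thesis .
qed

lemma psd_diagonal_mat:
  assumes "\<And>x. x < n \<Longrightarrow> f x \<ge> 0"
  shows "psd n (mat n n (\<lambda>(x, y). if x = y then complex_of_real (f x) else 0))"
    (is "psd n ?D")
  unfolding psd_def
proof (intro conjI allI)
  show "?D \<in> carrier_mat n n" by simp
  fix v :: "nat \<Rightarrow> complex"
  have "(\<Sum>i<n. \<Sum>j<n. cnj (v i) * ?D $$ (i, j) * v j) = (\<Sum>i<n. cnj (v i) * ?D $$ (i, i) * v i)"
    by (intro sum.cong refl sum_lessThan_eq_single) auto
  also have "\<dots> = complex_of_real (\<Sum>i<n. f i * (cmod (v i))\<^sup>2)"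
    by (simp add: complex_norm_square mult_ac del: of_real_power)
  finally have quad: "(\<Sum>i<n. \<Sum>j<n. cnj (v i) * ?D $$ (i, j) * v j) = complex_of_real (\<Sum>i<n. f i * (cmod (v i))\<^sup>2)" .
  have "(\<Sum>i<n. f i * (cmod (v i))\<^sup>2) \<ge> 0"
    using assms by (intro sum_nonneg) auto
  then show "(\<Sum>i<n. \<Sum>j<n. cnj (v i) * ?D $$ (i, j) * v j) \<in> \<real>"
    "0 \<le> Re (\<Sum>i<n. \<Sum>j<n. cnj (v i) * ?D $$ (i, j) * v j)"
    unfolding quad by auto
qed

lemma psd_diagonal_entry:
  assumes "psd n A" "i < n"
  shows "A $$ (i, i) = complex_of_real (Re (A $$ (i, i)))" "Re (A $$ (i, i)) \<ge> 0"
proof -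
  define v :: "nat \<Rightarrow> complex" where "v = (\<lambda>l. if l = i then 1 else 0)"
  have "(\<Sum>l<n. \<Sum>m<n. cnj (v l) * A $$ (l, m) * v m) = (\<Sum>m<n. cnj (v i) * A $$ (i, m) * v m)"
    using assms(2) by (rule sum_lessThan_eq_single) (simp add: v_def)
  also have "\<dots> = cnj (v i) * A $$ (i, i) * v i"
    using assms(2) by (rule sum_lessThan_eq_single) (simp add: v_def)
  also have "\<dots> = A $$ (i, i)"
    by (simp add: v_def)
  finally have "(\<Sum>l<n. \<Sum>m<n. cnj (v l) * A $$ (l, m) * v m) = A $$ (i, i)" .
  moreover have "(\<Sum>l<n. \<Sum>m<n. cnj (v l) * A $$ (l, m) * v m) \<in> \<real>"
    "Re (\<Sum>l<n. \<Sum>m<n. cnj (v l) * A $$ (l, m) * v m) \<ge> 0"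
    using assms(1) unfolding psd_def by blast+
  ultimately show "A $$ (i, i) = complex_of_real (Re (A $$ (i, i)))" "Re (A $$ (i, i)) \<ge> 0"
    by (auto simp: Reals_def)
qed

definition classical_on_diagonal :: "nat \<Rightarrow> nat \<Rightarrow> complex mat list \<Rightarrow> bool" where
  "classical_on_diagonal n m Ks \<longleftrightarrow>
     (\<forall>X \<in> carrier_mat n n. \<forall>a<m. kraus_apply m Ks X $$ (a, a) =
        (\<Sum>i<length Ks. \<Sum>y<n. complex_of_real ((cmod (Ks ! i $$ (a, y)))\<^sup>2) * X $$ (y, y)))"

lemma diagonal_kraus_apply_no_cross_terms:
  assumes Ks: "\<forall>K\<in>set Ks. K \<in> carrier_mat m n" and X: "X \<in> carrier_mat n n" and a: "a < m"
    and no_cross: "\<And>K x y. K \<in> set Ks \<Longrightarrow> x < n \<Longrightarrow> y < n \<Longrightarrow> y \<noteq> x \<Longrightarrow>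
      K $$ (a, x) * X $$ (x, y) * cnj (K $$ (a, y)) = 0"
  shows "kraus_apply m Ks X $$ (a, a) =
    (\<Sum>i<length Ks. \<Sum>y<n. complex_of_real ((cmod (Ks ! i $$ (a, y)))\<^sup>2) * X $$ (y, y))"
proof -
  have "kraus_apply m Ks X $$ (a, a) =
      (\<Sum>i<length Ks. \<Sum>x<n. \<Sum>y<n. Ks ! i $$ (a, x) * X $$ (x, y) * cnj (Ks ! i $$ (a, y)))"
    using Ks X a a by (rule index_kraus_apply)
  also have "\<dots> = (\<Sum>i<length Ks. \<Sum>x<n. Ks ! i $$ (a, x) * X $$ (x, x) * cnj (Ks ! i $$ (a, x)))"
    using no_cross by (intro sum.cong refl sum_lessThan_eq_single) auto
  also have "\<dots> = (\<Sum>i<length Ks. \<Sum>y<n. complex_of_real ((cmod (Ks ! i $$ (a, y)))\<^sup>2) * X $$ (y, y))"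
    by (simp add: complex_norm_square mult_ac del: of_real_power)
  finally show ?thesis .
qed

lemma DIO_classical_on_diagonal:
  assumes "DIO n m Ks"
  shows "classical_on_diagonal n m Ks"
  unfolding classical_on_diagonal_def
proof (intro ballI allI impI)
  fix X :: "complex mat" and a
  assume X: "X \<in> carrier_mat n n" and a: "a < m"
  have Ks: "\<forall>K\<in>set Ks. K \<in> carrier_mat m n"
    using assms unfolding DIO_def kraus_channel_def by auto
  have "kraus_apply m Ks X $$ (a, a) = dephase m (kraus_apply m Ks X) $$ (a, a)"
    using a by (simp add: index_dephase)
  also have "\<dots> = kraus_apply m Ks (dephase n X) $$ (a, a)"
    using assms X unfolding DIO_def by simp
  also have "\<dots> = (\<Sum>i<length Ks. \<Sum>y<n. complex_of_real ((cmod (Ks ! i $$ (a, y)))\<^sup>2) * dephase n X $$ (y, y))"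
    using Ks dephase_carrier a by (rule diagonal_kraus_apply_no_cross_terms) (simp add: index_dephase)
  also have "\<dots> = (\<Sum>i<length Ks. \<Sum>y<n. complex_of_real ((cmod (Ks ! i $$ (a, y)))\<^sup>2) * X $$ (y, y))"
    by (simp add: index_dephase)
  finally show "kraus_apply m Ks X $$ (a, a) =
    (\<Sum>i<length Ks. \<Sum>y<n. complex_of_real ((cmod (Ks ! i $$ (a, y)))\<^sup>2) * X $$ (y, y))" .
qed

lemma SIO_kraus_row_support:
  assumes S: "SIO n m Ks" and K: "K \<in> set Ks" and b: "b < m" and xy: "x < n" "y < n" "x \<noteq> y"
  shows "K $$ (b, x) = 0 \<or> K $$ (b, y) = 0"
proof -
  have Kc: "K \<in> carrier_mat m n"
    using S K unfolding SIO_def kraus_channel_def by auto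
  define \<sigma> where "\<sigma> = mat m m (\<lambda>(u, v). if u = v then complex_of_real (if u = b then 1 else 0) else 0)"
  have \<sigma>c: "\<sigma> \<in> carrier_mat m m"
    by (simp add: \<sigma>_def)
  have "incoherent_state m \<sigma>"
    unfolding incoherent_state_def density_def
  proof (intro conjI)
    show "psd m \<sigma>"
      unfolding \<sigma>_def by (rule psd_diagonal_mat) simp
    show "mtrace \<sigma> = 1"
      using b unfolding mtrace_def \<sigma>_def by (simp, subst sum_lessThan_eq_single[of b]) auto
    show "dephase m \<sigma> = \<sigma>"
      using \<sigma>c by (simp add: dephase_fixed_iff \<sigma>_def)
  qed
  then have "dephase n (mat_adjoint K * \<sigma> * K) = mat_adjoint K * \<sigma> * K"
    using S K unfolding SIO_def by blast
  then have "(mat_adjoint K * \<sigma> * K) $$ (x, y) = 0"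
    using xy index_dephase by metis
  moreover have "(mat_adjoint K * \<sigma> * K) $$ (x, y) = cnj (K $$ (b, x)) * K $$ (b, y)"
  proof -
    have "(mat_adjoint K * \<sigma> * K) $$ (x, y) = (\<Sum>u<m. \<Sum>v<m. cnj (K $$ (u, x)) * \<sigma> $$ (u, v) * K $$ (v, y))"
      by (rule index_adjoint_sandwich[OF Kc \<sigma>c xy(1,2)])
    also have "\<dots> = (\<Sum>v<m. cnj (K $$ (b, x)) * \<sigma> $$ (b, v) * K $$ (v, y))"
      using b by (rule sum_lessThan_eq_single) (use b in \<open>auto simp: \<sigma>_def\<close>)
    also have "\<dots> = cnj (K $$ (b, x)) * \<sigma> $$ (b, b) * K $$ (b, y)"
      using b by (rule sum_lessThan_eq_single) (use b in \<open>auto simp: \<sigma>_def\<close>)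
    also have "\<dots> = cnj (K $$ (b, x)) * K $$ (b, y)"
      using b by (simp add: \<sigma>_def)
    finally show ?thesis .
  qed
  ultimately show ?thesis
    by simp
qed

lemma SIO_classical_on_diagonal:
  assumes S: "SIO n m Ks"
  shows "classical_on_diagonal n m Ks"
  unfolding classical_on_diagonal_def
proof (intro ballI allI impI)
  fix X :: "complex mat" and a
  assume X: "X \<in> carrier_mat n n" and a: "a < m"
  have Ks: "\<forall>K\<in>set Ks. K \<in> carrier_mat m n"
    using S unfolding SIO_def kraus_channel_def by auto
  show "kraus_apply m Ks X $$ (a, a) =
    (\<Sum>i<length Ks. \<Sum>y<n. complex_of_real ((cmod (Ks ! i $$ (a, y)))\<^sup>2) * X $$ (y, y))"
    using Ks X a
  proof (rule diagonal_kraus_apply_no_cross_terms)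
    fix K x y
    assume "K \<in> set Ks" "x < n" "y < n" "y \<noteq> x"
    then have "K $$ (a, x) = 0 \<or> K $$ (a, y) = 0"
      using SIO_kraus_row_support[OF S _ a] by blast
    then show "K $$ (a, x) * X $$ (x, y) * cnj (K $$ (a, y)) = 0"
      by auto
  qed
qed

definition induced_povm :: "nat \<Rightarrow> complex mat list \<Rightarrow> nat \<Rightarrow> complex mat" where
  "induced_povm d Ks j = mat d d (\<lambda>(x, y). if x = y then
     complex_of_real (\<Sum>i<length Ks. \<Sum>b<d. (cmod (Ks ! i $$ (j * d + b, x)))\<^sup>2) else 0)"

lemma sum_induced_povm_diagonal:
  assumes channel: "kraus_channel d (k * d) Ks" and x: "x < d"
  shows "(\<Sum>j<k. induced_povm d Ks j $$ (x, x)) = 1"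
proof -
  have Ks: "\<forall>K\<in>set Ks. K \<in> carrier_mat (k * d) d"
    using channel unfolding kraus_channel_def by blast
  have gram_carrier: "\<forall>K\<in>set Ks. mat_adjoint K * K \<in> carrier_mat d d"
    using Ks carrier_mat_adjoint by (auto intro!: mult_carrier_mat)
  have "(\<Sum>j<k. induced_povm d Ks j $$ (x, x)) =
      complex_of_real (\<Sum>j<k. \<Sum>i<length Ks. \<Sum>b<d. (cmod (Ks ! i $$ (j * d + b, x)))\<^sup>2)"
    using x by (simp add: induced_povm_def)
  also have "\<dots> = (\<Sum>i<length Ks. \<Sum>a<k * d. complex_of_real ((cmod (Ks ! i $$ (a, x)))\<^sup>2))"
    by (subst sum.swap) (simp add: sum_lessThan_mult_split)
  also have "\<dots> = (\<Sum>i<length Ks. (mat_adjoint (Ks ! i) * Ks ! i) $$ (x, x))"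
  proof (rule sum.cong[OF refl])
    fix i
    assume "i \<in> {..<length Ks}"
    then have "(mat_adjoint (Ks ! i) * Ks ! i) $$ (x, x) = (\<Sum>a<k * d. cnj (Ks ! i $$ (a, x)) * Ks ! i $$ (a, x))"
      using Ks x by (intro index_adjoint_mult) auto
    then show "(\<Sum>a<k * d. complex_of_real ((cmod (Ks ! i $$ (a, x)))\<^sup>2)) = (mat_adjoint (Ks ! i) * Ks ! i) $$ (x, x)"
      by (simp only: complex_norm_square mult.commute)
  qed
  also have "\<dots> = msum d (map (\<lambda>K. mat_adjoint K * K) Ks) $$ (x, x)"
    using index_msum_map[OF gram_carrier x x] by simp
  also have "\<dots> = 1"
    using channel x unfolding kraus_channel_def by simp
  finally show ?thesis .
qed

lemma incoherent_povm_induced_povm: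
  assumes channel: "kraus_channel d (k * d) Ks"
  shows "incoherent_povm d k (induced_povm d Ks)"
proof -
  have carrier: "induced_povm d Ks j \<in> carrier_mat d d" for j
    by (simp add: induced_povm_def)
  have psd: "psd d (induced_povm d Ks j)" for j
    unfolding induced_povm_def by (rule psd_diagonal_mat) (intro sum_nonneg, simp)
  have diagonal: "dephase d (induced_povm d Ks j) = induced_povm d Ks j" for j
    using carrier by (subst dephase_fixed_iff) (simp_all add: induced_povm_def)
  have sum_carrier: "msum d (map (induced_povm d Ks) [0..<k]) \<in> carrier_mat d d"
    using carrier by (intro msum_carrier) simp
  have "msum d (map (induced_povm d Ks) [0..<k]) = 1\<^sub>m d"
  proof (rule eq_matI)
    fix x y
    assume "x < dim_row (1\<^sub>m d)" "y < dim_col (1\<^sub>m d)"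
    then have xy: "x < d" "y < d"
      by auto
    have "msum d (map (induced_povm d Ks) [0..<k]) $$ (x, y) = (\<Sum>j<k. induced_povm d Ks j $$ (x, y))"
      using index_msum_map[of "[0..<k]" "induced_povm d Ks", OF _ xy] carrier by simp
    also have "\<dots> = 1\<^sub>m d $$ (x, y)"
      using sum_induced_povm_diagonal[OF channel xy(1)] xy by (cases "x = y") (simp_all add: induced_povm_def)
    finally show "msum d (map (induced_povm d Ks) [0..<k]) $$ (x, y) = 1\<^sub>m d $$ (x, y)" .
  qed (use sum_carrier in auto)
  then show ?thesis
    unfolding incoherent_povm_def povm_def using psd diagonal by blast
qed

lemma success_induced_povm:
  assumes Ks: "\<forall>K\<in>set Ks. K \<in> carrier_mat (k * d) d" and classical: "classical_on_diagonal d (k * d) Ks"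
    and \<rho>: "\<rho> \<in> carrier_mat d d" and j: "j < k"
  shows "mtrace (kraus_apply (k * d) Ks \<rho> * projB k d j) = mtrace (induced_povm d Ks j * \<rho>)"
proof -
  have "mtrace (kraus_apply (k * d) Ks \<rho> * projB k d j) =
      (\<Sum>b<d. kraus_apply (k * d) Ks \<rho> $$ (j * d + b, j * d + b))"
    using kraus_apply_carrier[OF Ks \<rho>] j by (rule mtrace_mult_projB)
  also have "\<dots> = (\<Sum>b<d. \<Sum>i<length Ks. \<Sum>y<d.
      complex_of_real ((cmod (Ks ! i $$ (j * d + b, y)))\<^sup>2) * \<rho> $$ (y, y))"
    using classical \<rho> j block_index_less unfolding classical_on_diagonal_def
    by (intro sum.cong refl) blast
  also have "\<dots> = (\<Sum>i<length Ks. \<Sum>b<d. \<Sum>y<d.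
      complex_of_real ((cmod (Ks ! i $$ (j * d + b, y)))\<^sup>2) * \<rho> $$ (y, y))"
    by (rule sum.swap)
  also have "\<dots> = (\<Sum>i<length Ks. \<Sum>y<d. \<Sum>b<d.
      complex_of_real ((cmod (Ks ! i $$ (j * d + b, y)))\<^sup>2) * \<rho> $$ (y, y))"
    by (rule sum.cong[OF refl], rule sum.swap)
  also have "\<dots> = (\<Sum>y<d. \<Sum>i<length Ks. \<Sum>b<d.
      complex_of_real ((cmod (Ks ! i $$ (j * d + b, y)))\<^sup>2) * \<rho> $$ (y, y))"
    by (rule sum.swap)
  also have "\<dots> = (\<Sum>y<d. induced_povm d Ks j $$ (y, y) * \<rho> $$ (y, y))"
    by (intro sum.cong refl) (simp add: induced_povm_def sum_distrib_right)
  also have "\<dots> = mtrace (induced_povm d Ks j * \<rho>)"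
    using \<rho> incoherent_povm_induced_povm
    by (intro mtrace_mult_diagonal[symmetric]) (simp_all add: induced_povm_def dephase_fixed_iff)
  finally show ?thesis .
qed

definition record_weight :: "nat \<Rightarrow> (nat \<Rightarrow> complex mat) \<Rightarrow> nat \<Rightarrow> real" where
  "record_weight d E c = Re (E (c div d) $$ (c mod d, c mod d))"

(* For c = j * d + x this is sqrt(E_j(x,x)) |j,x><x|: measure x, write the outcome j into B
   and keep x in A'. *)
definition record_kraus :: "nat \<Rightarrow> nat \<Rightarrow> (nat \<Rightarrow> complex mat) \<Rightarrow> nat \<Rightarrow> complex mat" where
  "record_kraus d k E c = mat (k * d) d (\<lambda>(a, b).
     if a = c \<and> b = c mod d then complex_of_real (sqrt (record_weight d E c)) else 0)"

definition record_channel :: "nat \<Rightarrow> nat \<Rightarrow> (nat \<Rightarrow> complex mat) \<Rightarrow> complex mat list" where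
  "record_channel d k E = map (record_kraus d k E) [0..<k * d]"

lemma record_kraus_carrier: "record_kraus d k E c \<in> carrier_mat (k * d) d"
  by (simp add: record_kraus_def)

lemma record_channel_carrier: "\<forall>K\<in>set (record_channel d k E). K \<in> carrier_mat (k * d) d"
  by (auto simp: record_channel_def record_kraus_carrier)

lemma record_weight_block:
  assumes "incoherent_povm d k E" "j < k" "x < d"
  shows "complex_of_real (record_weight d E (j * d + x)) = E j $$ (x, x)"
    and "record_weight d E (j * d + x) \<ge> 0"
proof -
  have "psd d (E j)"
    using assms(1,2) unfolding incoherent_povm_def povm_def by blast
  then show "complex_of_real (record_weight d E (j * d + x)) = E j $$ (x, x)"
    and "record_weight d E (j * d + x) \<ge> 0"
    using psd_diagonal_entry[of d "E j" x] assms(3) by (simp_all add: record_weight_def)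
qed

lemma record_weight_nonneg:
  assumes "incoherent_povm d k E" "c < k * d"
  shows "record_weight d E c \<ge> 0"
proof -
  have "d > 0" "c div d < k"
    using assms(2) by (cases "d = 0", auto simp: less_mult_imp_div_less)
  then show ?thesis
    using record_weight_block(2)[OF assms(1), of "c div d" "c mod d"] by simp
qed

lemma index_record_sandwich:
  assumes w: "record_weight d E c \<ge> 0" and Y: "Y \<in> carrier_mat d d" and c: "c < k * d"
    and ab: "a < k * d" "b < k * d"
  shows "(record_kraus d k E c * Y * mat_adjoint (record_kraus d k E c)) $$ (a, b) =
    (if a = c \<and> b = c then complex_of_real (record_weight d E c) * Y $$ (c mod d, c mod d) else 0)"
proof -
  let ?K = "record_kraus d k E c"
  have cd: "c mod d < d"
    using c by (cases "d = 0") auto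
  have "(?K * Y * mat_adjoint ?K) $$ (a, b) = (\<Sum>x<d. \<Sum>y<d. ?K $$ (a, x) * Y $$ (x, y) * cnj (?K $$ (b, y)))"
    using record_kraus_carrier Y ab by (rule index_sandwich)
  also have "\<dots> = (if a = c \<and> b = c then complex_of_real (record_weight d E c) * Y $$ (c mod d, c mod d) else 0)"
  proof (cases "a = c \<and> b = c")
    case True
    have "(\<Sum>x<d. \<Sum>y<d. ?K $$ (a, x) * Y $$ (x, y) * cnj (?K $$ (b, y))) =
        (\<Sum>y<d. ?K $$ (a, c mod d) * Y $$ (c mod d, y) * cnj (?K $$ (b, y)))"
      using cd by (rule sum_lessThan_eq_single) (use ab in \<open>auto simp: record_kraus_def\<close>)
    also have "\<dots> = ?K $$ (a, c mod d) * Y $$ (c mod d, c mod d) * cnj (?K $$ (b, c mod d))"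
      using cd by (rule sum_lessThan_eq_single) (use ab in \<open>auto simp: record_kraus_def\<close>)
    also have "\<dots> = complex_of_real (record_weight d E c) * Y $$ (c mod d, c mod d)"
      using True ab cd w by (simp add: record_kraus_def mult_ac flip: of_real_mult)
    finally show ?thesis
      using True by simp
  next
    case False
    then show ?thesis
      using ab by (auto simp: record_kraus_def intro!: sum.neutral)
  qed
  finally show ?thesis .
qed

lemma index_record_adjoint_sandwich:
  assumes w: "record_weight d E c \<ge> 0" and S: "S \<in> carrier_mat (k * d) (k * d)" and c: "c < k * d"
    and xy: "x < d" "y < d"
  shows "(mat_adjoint (record_kraus d k E c) * S * record_kraus d k E c) $$ (x, y) =
    (if x = c mod d \<and> y = c mod d then complex_of_real (record_weight d E c) * S $$ (c, c) else 0)"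
proof -
  let ?K = "record_kraus d k E c"
  have "(mat_adjoint ?K * S * ?K) $$ (x, y) = (\<Sum>a<k * d. \<Sum>b<k * d. cnj (?K $$ (a, x)) * S $$ (a, b) * ?K $$ (b, y))"
    using record_kraus_carrier S xy by (rule index_adjoint_sandwich)
  also have "\<dots> = (if x = c mod d \<and> y = c mod d then complex_of_real (record_weight d E c) * S $$ (c, c) else 0)"
  proof (cases "x = c mod d \<and> y = c mod d")
    case True
    have "(\<Sum>a<k * d. \<Sum>b<k * d. cnj (?K $$ (a, x)) * S $$ (a, b) * ?K $$ (b, y)) =
        (\<Sum>b<k * d. cnj (?K $$ (c, x)) * S $$ (c, b) * ?K $$ (b, y))"
      using c by (rule sum_lessThan_eq_single) (use xy in \<open>auto simp: record_kraus_def\<close>)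
    also have "\<dots> = cnj (?K $$ (c, x)) * S $$ (c, c) * ?K $$ (c, y)"
      using c by (rule sum_lessThan_eq_single) (use xy in \<open>auto simp: record_kraus_def\<close>)
    also have "\<dots> = complex_of_real (record_weight d E c) * S $$ (c, c)"
      using True c xy w by (simp add: record_kraus_def mult_ac flip: of_real_mult)
    finally show ?thesis
      using True by simp
  next
    case False
    then show ?thesis
      using xy by (auto simp: record_kraus_def intro!: sum.neutral)
  qed
  finally show ?thesis .
qed

lemma index_kraus_apply_record_channel:
  assumes E: "incoherent_povm d k E" and Y: "Y \<in> carrier_mat d d" and ab: "a < k * d" "b < k * d"
  shows "kraus_apply (k * d) (record_channel d k E) Y $$ (a, b) =
    (if a = b then complex_of_real (record_weight d E a) * Y $$ (a mod d, a mod d) else 0)"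
proof -
  let ?terms = "\<lambda>c. record_kraus d k E c * Y * mat_adjoint (record_kraus d k E c)"
  have "\<forall>c\<in>set [0..<k * d]. ?terms c \<in> carrier_mat (k * d) (k * d)"
    using sandwich_carrier[OF record_kraus_carrier Y] by blast
  moreover have "kraus_apply (k * d) (record_channel d k E) Y = msum (k * d) (map ?terms [0..<k * d])"
    by (simp add: kraus_apply_def record_channel_def comp_def)
  ultimately have "kraus_apply (k * d) (record_channel d k E) Y $$ (a, b) = (\<Sum>c<k * d. ?terms c $$ (a, b))"
    using index_msum_map[of "[0..<k * d]" ?terms, OF _ ab] by simp
  also have "\<dots> = (\<Sum>c<k * d. if c = a \<and> a = b then complex_of_real (record_weight d E c) * Y $$ (c mod d, c mod d) else 0)"
    using ab by (intro sum.cong refl) (auto simp: index_record_sandwich[OF record_weight_nonneg[OF E] Y])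
  also have "\<dots> = (if a = b then complex_of_real (record_weight d E a) * Y $$ (a mod d, a mod d) else 0)"
    using ab by (subst sum_lessThan_eq_single[of a]) auto
  finally show ?thesis .
qed

lemma sum_index_record_gram:
  assumes E: "incoherent_povm d k E" and xy: "x < d" "y < d"
  shows "(\<Sum>c<k * d. (mat_adjoint (record_kraus d k E c) * record_kraus d k E c) $$ (x, y)) =
    (\<Sum>j<k. if x = y then E j $$ (x, x) else 0)"
proof -
  let ?K = "record_kraus d k E"
  have "(\<Sum>c<k * d. (mat_adjoint (?K c) * ?K c) $$ (x, y)) =
      (\<Sum>c<k * d. (mat_adjoint (?K c) * 1\<^sub>m (k * d) * ?K c) $$ (x, y))"
    using right_mult_one_mat[OF carrier_mat_adjoint[OF record_kraus_carrier]] by simp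
  also have "\<dots> = (\<Sum>c<k * d. if x = c mod d \<and> y = c mod d then complex_of_real (record_weight d E c) else 0)"
    using xy by (intro sum.cong refl) (simp add: index_record_adjoint_sandwich[OF record_weight_nonneg[OF E]])
  also have "\<dots> = (\<Sum>j<k. \<Sum>b<d. if x = (j * d + b) mod d \<and> y = (j * d + b) mod d
      then complex_of_real (record_weight d E (j * d + b)) else 0)"
    by (rule sum_lessThan_mult_split)
  also have "\<dots> = (\<Sum>j<k. if x = y then complex_of_real (record_weight d E (j * d + x)) else 0)"
    using xy by (intro sum.cong refl, subst sum_lessThan_eq_single[of x]) auto
  also have "\<dots> = (\<Sum>j<k. if x = y then E j $$ (x, x) else 0)"
    using record_weight_block(1)[OF E _ xy(1)] by (intro sum.cong refl) auto
  finally show ?thesis .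
qed

lemma kraus_channel_record_channel:
  assumes E: "incoherent_povm d k E"
  shows "kraus_channel d (k * d) (record_channel d k E)"
proof -
  let ?gram = "\<lambda>c. mat_adjoint (record_kraus d k E c) * record_kraus d k E c"
  have gram_carrier: "\<forall>c\<in>set [0..<k * d]. ?gram c \<in> carrier_mat d d"
    using mult_carrier_mat[OF carrier_mat_adjoint[OF record_kraus_carrier] record_kraus_carrier] by blast
  have E_carrier: "\<forall>j\<in>set [0..<k]. E j \<in> carrier_mat d d"
    using E unfolding incoherent_povm_def povm_def psd_def by simp
  have sum_carrier: "msum d (map ?gram [0..<k * d]) \<in> carrier_mat d d"
    using gram_carrier by (intro msum_carrier) simp
  have "msum d (map ?gram [0..<k * d]) = 1\<^sub>m d"
  proof (rule eq_matI)
    fix x y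
    assume "x < dim_row (1\<^sub>m d)" "y < dim_col (1\<^sub>m d)"
    then have xy: "x < d" "y < d"
      by auto
    have "msum d (map ?gram [0..<k * d]) $$ (x, y) = (\<Sum>j<k. if x = y then E j $$ (x, x) else 0)"
      using index_msum_map[OF gram_carrier xy] sum_index_record_gram[OF E xy] by simp
    also have "\<dots> = 1\<^sub>m d $$ (x, y)"
    proof (cases "x = y")
      case True
      have "(\<Sum>j<k. E j $$ (x, x)) = msum d (map E [0..<k]) $$ (x, x)"
        using index_msum_map[OF E_carrier xy(1) xy(1)] by simp
      also have "\<dots> = 1"
        using E xy unfolding incoherent_povm_def povm_def by simp
      finally show ?thesis
        using True xy by simp
    qed (use xy in simp)
    finally show "msum d (map ?gram [0..<k * d]) $$ (x, y) = 1\<^sub>m d $$ (x, y)" .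
  qed (use sum_carrier in simp_all)
  then show ?thesis
    unfolding kraus_channel_def using record_channel_carrier by (simp add: record_channel_def comp_def)
qed

lemma SIO_record_channel:
  assumes E: "incoherent_povm d k E"
  shows "SIO d (k * d) (record_channel d k E)"
  unfolding SIO_def
proof (intro conjI ballI allI impI)
  show "kraus_channel d (k * d) (record_channel d k E)"
    using E by (rule kraus_channel_record_channel)
next
  fix K \<rho>
  assume "K \<in> set (record_channel d k E)" "incoherent_state d \<rho>"
  then obtain c where c: "c < k * d" and K: "K = record_kraus d k E c" and \<rho>: "\<rho> \<in> carrier_mat d d"
    unfolding record_channel_def incoherent_state_def density_def psd_def by auto
  show "dephase (k * d) (K * \<rho> * mat_adjoint K) = K * \<rho> * mat_adjoint K"
    using sandwich_carrier[OF record_kraus_carrier \<rho>]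
    by (subst dephase_fixed_iff) (simp_all add: K index_record_sandwich[OF record_weight_nonneg[OF E c] \<rho> c])
next
  fix K \<sigma>
  assume "K \<in> set (record_channel d k E)" "incoherent_state (k * d) \<sigma>"
  then obtain c where c: "c < k * d" and K: "K = record_kraus d k E c" and \<sigma>: "\<sigma> \<in> carrier_mat (k * d) (k * d)"
    unfolding record_channel_def incoherent_state_def density_def psd_def by auto
  have "mat_adjoint K * \<sigma> * K \<in> carrier_mat d d"
    using K carrier_mat_adjoint[OF record_kraus_carrier] \<sigma> record_kraus_carrier by (metis mult_carrier_mat)
  then show "dephase d (mat_adjoint K * \<sigma> * K) = mat_adjoint K * \<sigma> * K"
    by (subst dephase_fixed_iff) (simp_all add: K index_record_adjoint_sandwich[OF record_weight_nonneg[OF E c] \<sigma> c])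
qed

lemma DIO_record_channel:
  assumes E: "incoherent_povm d k E"
  shows "DIO d (k * d) (record_channel d k E)"
  unfolding DIO_def
proof (intro conjI ballI)
  show "kraus_channel d (k * d) (record_channel d k E)"
    using E by (rule kraus_channel_record_channel)
  fix X :: "complex mat"
  assume X: "X \<in> carrier_mat d d"
  have \<Delta>X: "dephase d X \<in> carrier_mat d d"
    by (rule dephase_carrier)
  show "kraus_apply (k * d) (record_channel d k E) (dephase d X) =
      dephase (k * d) (kraus_apply (k * d) (record_channel d k E) X)"
  proof (rule eq_matI)
    fix a b
    assume "a < dim_row (dephase (k * d) (kraus_apply (k * d) (record_channel d k E) X))"
      "b < dim_col (dephase (k * d) (kraus_apply (k * d) (record_channel d k E) X))"
    then have ab: "a < k * d" "b < k * d"
      by (auto simp: dephase_def)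
    then have "a mod d < d"
      by (cases "d = 0") auto
    then show "kraus_apply (k * d) (record_channel d k E) (dephase d X) $$ (a, b) =
        dephase (k * d) (kraus_apply (k * d) (record_channel d k E) X) $$ (a, b)"
      using ab by (simp add: index_dephase index_kraus_apply_record_channel[OF E X] index_kraus_apply_record_channel[OF E \<Delta>X])
  qed (use carrier_matD[OF kraus_apply_carrier[OF record_channel_carrier \<Delta>X]]
          carrier_matD[OF dephase_carrier] in simp_all)
qed

lemma success_record_channel:
  assumes E: "incoherent_povm d k E" and \<rho>: "\<rho> \<in> carrier_mat d d" and j: "j < k"
  shows "mtrace (kraus_apply (k * d) (record_channel d k E) \<rho> * projB k d j) = mtrace (E j * \<rho>)"
proof -
  have Ej: "E j \<in> carrier_mat d d" "dephase d (E j) = E j"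
    using E j unfolding incoherent_povm_def povm_def psd_def by simp_all
  have "mtrace (kraus_apply (k * d) (record_channel d k E) \<rho> * projB k d j) =
      (\<Sum>b<d. kraus_apply (k * d) (record_channel d k E) \<rho> $$ (j * d + b, j * d + b))"
    using kraus_apply_carrier[OF record_channel_carrier \<rho>] j by (rule mtrace_mult_projB)
  also have "\<dots> = (\<Sum>b<d. E j $$ (b, b) * \<rho> $$ (b, b))"
    using block_index_less[OF j] record_weight_block(1)[OF E j]
    by (intro sum.cong refl) (simp add: index_kraus_apply_record_channel[OF E \<rho>])
  also have "\<dots> = mtrace (E j * \<rho>)"
    using Ej \<rho> by (intro mtrace_mult_diagonal[symmetric])
  finally show ?thesis .
qed

lemma Psuc_tilde_eq_Psuc_MI:
  assumes \<rho>: "\<And>j. j < k \<Longrightarrow> \<rho> j \<in> carrier_mat d d"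
    and realizes: "\<And>E. incoherent_povm d k E \<Longrightarrow> Ops d (k * d) (record_channel d k E)"
    and channel: "\<And>Ks. Ops d (k * d) Ks \<Longrightarrow> kraus_channel d (k * d) Ks"
    and classical: "\<And>Ks. Ops d (k * d) Ks \<Longrightarrow> classical_on_diagonal d (k * d) Ks"
  shows "Psuc_tilde Ops d k p \<rho> = Psuc_MI d k p \<rho>"
proof -
  have "{\<Sum>j<k. p j * Re (mtrace (kraus_apply (k * d) Ks (\<rho> j) * projB k d j)) | Ks. Ops d (k * d) Ks} =
      {\<Sum>j<k. p j * Re (mtrace (E j * \<rho> j)) | E. incoherent_povm d k E}"
  proof (intro equalityI subsetI)
    fix v
    assume "v \<in> {\<Sum>j<k. p j * Re (mtrace (kraus_apply (k * d) Ks (\<rho> j) * projB k d j)) | Ks. Ops d (k * d) Ks}"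
    then obtain Ks where Ks: "Ops d (k * d) Ks"
      and v: "v = (\<Sum>j<k. p j * Re (mtrace (kraus_apply (k * d) Ks (\<rho> j) * projB k d j)))"
      by blast
    have "kraus_channel d (k * d) Ks" "classical_on_diagonal d (k * d) Ks"
      using channel[OF Ks] classical[OF Ks] .
    then have "v = (\<Sum>j<k. p j * Re (mtrace (induced_povm d Ks j * \<rho> j)))"
      unfolding v kraus_channel_def by (intro sum.cong refl) (simp add: success_induced_povm \<rho>)
    then show "v \<in> {\<Sum>j<k. p j * Re (mtrace (E j * \<rho> j)) | E. incoherent_povm d k E}"
      using incoherent_povm_induced_povm[OF channel[OF Ks]] by blast
  next
    fix v
    assume "v \<in> {\<Sum>j<k. p j * Re (mtrace (E j * \<rho> j)) | E. incoherent_povm d k E}"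
    then obtain E where E: "incoherent_povm d k E" and v: "v = (\<Sum>j<k. p j * Re (mtrace (E j * \<rho> j)))"
      by blast
    then have "v = (\<Sum>j<k. p j * Re (mtrace (kraus_apply (k * d) (record_channel d k E) (\<rho> j) * projB k d j)))"
      unfolding v by (intro sum.cong refl) (simp add: success_record_channel \<rho>)
    then show "v \<in> {\<Sum>j<k. p j * Re (mtrace (kraus_apply (k * d) Ks (\<rho> j) * projB k d j)) | Ks. Ops d (k * d) Ks}"
      using realizes[OF E] by blast
  qed
  then show ?thesis
    unfolding Psuc_tilde_def Psuc_MI_def by simp
qed

theorem lemmaS2:
  fixes d k :: nat and p :: "nat \<Rightarrow> real" and \<rho> :: "nat \<Rightarrow> complex mat"
  assumes "ensemble d k p \<rho>"
  shows "Psuc_MI d k p \<rho> = Psuc_tilde SIO d k p \<rho>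
       \<and> Psuc_tilde SIO d k p \<rho> = Psuc_tilde DIO d k p \<rho>"
proof -
  have \<rho>: "\<And>j. j < k \<Longrightarrow> \<rho> j \<in> carrier_mat d d"
    using assms unfolding ensemble_def density_def psd_def by blast
  have "Psuc_tilde SIO d k p \<rho> = Psuc_MI d k p \<rho>"
    by (rule Psuc_tilde_eq_Psuc_MI)
      (simp_all add: \<rho> SIO_record_channel SIO_classical_on_diagonal SIO_def[THEN iffD1, THEN conjunct1])
  moreover have "Psuc_tilde DIO d k p \<rho> = Psuc_MI d k p \<rho>"
    by (rule Psuc_tilde_eq_Psuc_MI)
      (simp_all add: \<rho> DIO_record_channel DIO_classical_on_diagonal DIO_def[THEN iffD1, THEN conjunct1])
  ultimately show ?thesis
    by simp
qed

end
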